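(* For all real numbers $a,b$ with $-1\le a<1$ and $0<b<1$, $$\int_0^\infty\frac{\sinh(bt)}{\cosh(t)-a}\,\mathrm{d}t>-\frac{2b}{1+a}\log\Big(\frac12(1-a)\Big).$$ *)

theory Defs
  imports "HOL-Analysis.Analysis"
begin

text \<open>Right-hand side of the bound, -(2b/(1+a)) log((1-a)/2); at a = -1 the
expression is of the form 0/0 and is interpreted by its continuous extension, b.\<close>
definition C1_bound :: "real \<Rightarrow> real \<Rightarrow> real" where
  "C1_bound a b = (if a = -1 then b else - (2 * b / (1 + a)) * ln ((1 - a) / 2))"

end

theory Submission
  imports Defs "HOL-Real_Asymp.Real_Asymp"
begin

text \<open>For \<open>t > 0\<close> one has \<open>sinh (b t) > 2 b sinh t / (cosh t + 1)\<close>: both sides vanish at \<open>0\<close>,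
  and the derivative \<open>2 b / (cosh t + 1)\<close> of the right side is below \<open>b\<close>. So the integrand
  dominates \<open>2 b sinh t / ((cosh t + 1) (cosh t - a))\<close>, which has the elementary primitive
  \<open>2 b / (1 + a) \<cdot> ln ((cosh t - a) / (cosh t + 1))\<close> (or \<open>-2 b / (cosh t + 1)\<close> when \<open>a = -1\<close>),
  vanishing at infinity and equal to \<open>-C1_bound a b\<close> at \<open>0\<close>. The inequality stays strict in
  the limit because the gap between the two integrals over \<open>[0, 1]\<close> is a fixed positive amount.\<close>

lemma integral_atLeast_gt_minus_antiderivative:
  fixes f g G :: "real \<Rightarrow> real"
  assumes cont_f: "continuous_on {x0..} f" and cont_g: "continuous_on {x0..} g"
    and int_f: "f integrable_on {x0..}"
    and f_nonneg: "\<And>t. t \<ge> x0 \<Longrightarrow> 0 \<le> f t"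
    and g_less_f: "\<And>t. t > x0 \<Longrightarrow> g t < f t"
    and G_deriv: "\<And>t. t \<ge> x0 \<Longrightarrow> (G has_real_derivative g t) (at t)"
    and G_lim: "(G \<longlongrightarrow> 0) at_top"
  shows "- G x0 < integral {x0..} f"
proof -
  have int_f_Icc: "f integrable_on {u..v}" and int_g_Icc: "g integrable_on {u..v}"
    if "x0 \<le> u" for u v
    using that by (auto intro!: integrable_continuous_interval
        continuous_on_subset[OF cont_f] continuous_on_subset[OF cont_g])
  define \<delta> where "\<delta> = integral {x0..x0 + 1} f - integral {x0..x0 + 1} g"
  have "integral {x0..x0 + 1} g < integral {x0..x0 + 1} f"
    by (intro integral_less_real continuous_on_subset[OF cont_g] continuous_on_subset[OF cont_f]
        g_less_f) auto
  then have \<delta>_pos: "\<delta> > 0"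
    unfolding \<delta>_def by simp
  have "\<forall>\<^sub>F T in at_top. G T - G x0 + \<delta> \<le> integral {x0..} f"
    using eventually_ge_at_top[of "x0 + 1"]
  proof eventually_elim
    case (elim T)
    have "(g has_integral (G T - G x0)) {x0..T}"
      using elim by (intro fundamental_theorem_of_calculus)
        (auto intro!: DERIV_subset[OF G_deriv]
          simp: has_real_derivative_iff_has_vector_derivative[symmetric])
    then have "G T - G x0 = integral {x0..x0 + 1} g + integral {x0 + 1..T} g"
      using elim int_g_Icc
        Henstock_Kurzweil_Integration.integral_combine[where a = x0 and c = "x0 + 1" and b = T and f = g]
      by (simp add: integral_unique)
    also have "integral {x0 + 1..T} g \<le> integral {x0 + 1..T} f"
      using int_f_Icc int_g_Icc g_less_f by (intro integral_le) (auto intro: less_imp_le)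
    also have "integral {x0..x0 + 1} g + integral {x0 + 1..T} f + \<delta> = integral {x0..T} f"
      using elim int_f_Icc
        Henstock_Kurzweil_Integration.integral_combine[where a = x0 and c = "x0 + 1" and b = T and f = f]
      by (simp add: \<delta>_def)
    also have "\<dots> \<le> integral {x0..} f"
      using int_f_Icc int_f f_nonneg by (intro integral_subset_le) auto
    finally show ?case by simp
  qed
  moreover have "((\<lambda>T. G T - G x0 + \<delta>) \<longlongrightarrow> 0 - G x0 + \<delta>) at_top"
    by (intro tendsto_intros G_lim)
  ultimately have "0 - G x0 + \<delta> \<le> integral {x0..} f"
    using tendsto_le[OF trivial_limit_at_top_linorder tendsto_const] by blast
  with \<delta>_pos show ?thesis by simp
qed

lemma has_real_derivative_sinh_div_cosh_plus_one:
  "((\<lambda>x. sinh x / (cosh x + 1)) has_real_derivative 1 / (cosh x + 1)) (at x)"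
proof -
  have pos: "cosh x + 1 > 0"
    using cosh_real_ge_1[of x] by linarith
  then have "((\<lambda>x. sinh x / (cosh x + 1)) has_real_derivative
      (cosh x * (cosh x + 1) - sinh x * sinh x) / (cosh x + 1)\<^sup>2) (at x)"
    by (auto intro!: derivative_eq_intros simp: power2_eq_square)
  moreover have "cosh x * (cosh x + 1) - sinh x * sinh x = cosh x + 1"
    using cosh_square_eq[of x] by (simp add: algebra_simps power2_eq_square)
  ultimately show ?thesis
    using pos by (simp add: power2_eq_square)
qed

lemma sinh_mult_gt_sinh_div_cosh_plus_one:
  fixes b t :: real
  assumes "0 < b" "0 < t"
  shows "2 * b * sinh t / (cosh t + 1) < sinh (b * t)"
proof -
  define \<phi> where "\<phi> x = sinh (b * x) - 2 * b * (sinh x / (cosh x + 1))" for x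
  have "((\<lambda>x. sinh (b * x)) has_real_derivative cosh (b * x) * b) (at x)" for x
    by (auto intro!: derivative_eq_intros)
  then have \<phi>_deriv: "(\<phi> has_real_derivative cosh (b * x) * b - 2 * b * (1 / (cosh x + 1))) (at x)" for x
    unfolding \<phi>_def by (intro DERIV_diff DERIV_cmult has_real_derivative_sinh_div_cosh_plus_one)
  have "\<phi> 0 < \<phi> t"
  proof (rule DERIV_pos_imp_increasing_open[OF \<open>0 < t\<close>])
    fix x :: real
    assume "0 < x" "x < t"
    then have "cosh x > 1"
      using cosh_real_ge_1[of x] cosh_real_one_iff[of x] by linarith
    then have "2 * b * (1 / (cosh x + 1)) < 1 * b"
      using \<open>0 < b\<close> by (simp add: field_simps)
    also have "1 * b \<le> cosh (b * x) * b"
      using \<open>0 < b\<close> cosh_real_ge_1[of "b * x"] by (intro mult_right_mono) auto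
    finally show "\<exists>y. (\<phi> has_real_derivative y) (at x) \<and> 0 < y"
      using \<phi>_deriv[of x] by (intro exI[of _ "cosh (b * x) * b - 2 * b * (1 / (cosh x + 1))"]) simp
  next
    have "cosh x + 1 \<noteq> 0" for x :: real
      using cosh_real_ge_1[of x] by linarith
    then show "continuous_on {0..t} \<phi>"
      unfolding \<phi>_def by (intro continuous_intros) auto
  qed
  then show ?thesis
    by (simp add: \<phi>_def)
qed

lemma min_one_diff_mult_cosh_le: "min 1 (1 - a) * cosh t \<le> cosh t - (a :: real)"
proof (cases "a \<ge> 0")
  case True
  then have "a \<le> a * cosh t"
    using cosh_real_ge_1[of t] by (simp add: mult_le_cancel_left1)
  moreover have "min 1 (1 - a) * cosh t \<le> (1 - a) * cosh t"
    using cosh_real_ge_1[of t] by (intro mult_right_mono) auto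
  ultimately show ?thesis
    by (simp add: algebra_simps)
next
  case False
  have "min 1 (1 - a) * cosh t \<le> 1 * cosh t"
    using cosh_real_ge_1[of t] by (intro mult_right_mono) auto
  with False show ?thesis
    by linarith
qed

lemma sinh_mult_div_cosh_minus_integrable:
  fixes a b :: real
  assumes "a < 1" "0 \<le> b" "b < 1"
  shows "(\<lambda>t. sinh (b * t) / (cosh t - a)) integrable_on {0..}"
proof (rule measurable_bounded_by_integrable_imp_integrable)
  define c where "c = min 1 (1 - a)"
  have "c > 0"
    using \<open>a < 1\<close> by (simp add: c_def)
  have c_le: "c * cosh t \<le> cosh t - a" for t
    unfolding c_def by (rule min_one_diff_mult_cosh_le)
  have denom_pos: "cosh t - a > 0" for t
    using cosh_real_ge_1[of t] \<open>a < 1\<close> by linarith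
  show halfline: "{0::real..} \<in> sets lebesgue"
    by simp
  show "(\<lambda>t. sinh (b * t) / (cosh t - a)) \<in> borel_measurable (lebesgue_on {0..})"
    using denom_pos
    by (intro continuous_imp_measurable_on_sets_lebesgue halfline continuous_intros)
      (auto simp: less_le)
  show "(\<lambda>t. exp (- (1 - b) * t) / c) integrable_on {0..}"
    using integrable_on_exp_minus_to_infinity[of "1 - b" 0] \<open>b < 1\<close>
    by (intro integrable_on_divide) simp
  fix t :: real
  assume "t \<in> {0..}"
  then have "norm (sinh (b * t) / (cosh t - a)) = sinh (b * t) / (cosh t - a)"
    using denom_pos[of t] \<open>0 \<le> b\<close> by simp
  also have "\<dots> \<le> sinh (b * t) / (c * cosh t)"
    using \<open>t \<in> {0..}\<close> \<open>0 \<le> b\<close> \<open>c > 0\<close> denom_pos[of t] c_le[of t]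
    by (intro divide_left_mono mult_pos_pos) auto
  also have "\<dots> \<le> (exp (b * t) / 2) / (c * (exp t / 2))"
  proof (rule frac_le)
    show "sinh (b * t) \<le> exp (b * t) / 2"
      by (simp add: sinh_def)
    show "c * (exp t / 2) \<le> c * cosh t"
      using \<open>c > 0\<close> by (intro mult_left_mono) (auto simp: cosh_def)
  qed (use \<open>c > 0\<close> in auto)
  also have "\<dots> = exp (- (1 - b) * t) / c"
    using \<open>c > 0\<close> by (simp add: field_simps exp_add[symmetric] exp_diff)
  finally show "norm (sinh (b * t) / (cosh t - a)) \<le> exp (- (1 - b) * t) / c" .
qed

lemma C1_bound_antiderivative:
  fixes a b :: real
  assumes "-1 \<le> a" "a < 1"
  obtains G where
    "\<And>t. (G has_real_derivative 2 * b * sinh t / ((cosh t + 1) * (cosh t - a))) (at t)"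
    "(G \<longlongrightarrow> 0) at_top" "- G 0 = C1_bound a b"
proof (cases "a = -1")
  case True
  define G where "G t = - 2 * b / (cosh t + 1)" for t
  have "(G has_real_derivative 2 * b * sinh t / ((cosh t + 1) * (cosh t - a))) (at t)" for t
    using cosh_real_ge_1[of t] unfolding G_def True
    by (auto intro!: derivative_eq_intros simp: power2_eq_square)
  moreover have "(G \<longlongrightarrow> 0) at_top"
    unfolding G_def cosh_def real_scaleR_def by real_asymp
  moreover have "- G 0 = C1_bound a b"
    using True by (simp add: G_def C1_bound_def)
  ultimately show thesis
    by (fact that)
next
  case False
  then have "1 + a > 0"
    using \<open>-1 \<le> a\<close> by simp
  define G where "G t = 2 * b / (1 + a) * (ln (cosh t - a) - ln (cosh t + 1))" for t
  have "(G has_real_derivative 2 * b * sinh t / ((cosh t + 1) * (cosh t - a))) (at t)" for t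
  proof -
    have pos: "cosh t - a > 0" "cosh t + 1 > 0"
      using cosh_real_ge_1[of t] \<open>a < 1\<close> by linarith+
    then have "sinh t / (cosh t - a) - sinh t / (cosh t + 1)
        = (1 + a) * sinh t / ((cosh t + 1) * (cosh t - a))"
      by (simp add: field_simps)
    with pos \<open>1 + a > 0\<close> show ?thesis
      unfolding G_def by (auto intro!: derivative_eq_intros)
  qed
  moreover have "((\<lambda>t. ln (cosh t - a) - ln (cosh t + 1)) \<longlongrightarrow> 0) at_top"
    unfolding cosh_def real_scaleR_def using \<open>a < 1\<close> by real_asymp
  then have "(G \<longlongrightarrow> 0) at_top"
    unfolding G_def using tendsto_mult_right_zero by blast
  moreover have "- G 0 = C1_bound a b"
    using False \<open>a < 1\<close> by (simp add: G_def C1_bound_def ln_div)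
  ultimately show thesis
    by (fact that)
qed

theorem lemmaC1:
  fixes a b :: real
  assumes "-1 \<le> a" "a < 1" "0 < b" "b < 1"
  shows "(\<lambda>t. sinh (b * t) / (cosh t - a)) integrable_on {0..}
         \<and> integral {0..} (\<lambda>t. sinh (b * t) / (cosh t - a)) > C1_bound a b"
proof
  have denom_pos: "cosh t - a > 0" "cosh t + 1 > 0" for t
    using cosh_real_ge_1[of t] \<open>a < 1\<close> by linarith+
  show integrable: "(\<lambda>t. sinh (b * t) / (cosh t - a)) integrable_on {0..}"
    using assms by (intro sinh_mult_div_cosh_minus_integrable) auto
  obtain G where G: "\<And>t. (G has_real_derivative 2 * b * sinh t / ((cosh t + 1) * (cosh t - a))) (at t)"
    "(G \<longlongrightarrow> 0) at_top" "- G 0 = C1_bound a b"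
    using C1_bound_antiderivative assms(1,2) by blast
  have "- G 0 < integral {0..} (\<lambda>t. sinh (b * t) / (cosh t - a))"
  proof (rule integral_atLeast_gt_minus_antiderivative[OF _ _ integrable _ _ G(1) G(2)])
    show "continuous_on {0..} (\<lambda>t. sinh (b * t) / (cosh t - a))"
      using denom_pos by (intro continuous_intros) (auto simp: less_le)
    show "continuous_on {0..} (\<lambda>t. 2 * b * sinh t / ((cosh t + 1) * (cosh t - a)))"
      using denom_pos by (intro continuous_intros) (auto simp: less_le)
  next
    fix t :: real
    assume "t \<ge> 0"
    then show "0 \<le> sinh (b * t) / (cosh t - a)"
      using denom_pos[of t] \<open>0 < b\<close> by simp
  next
    fix t :: real
    assume "t > 0"
    then have "2 * b * sinh t / (cosh t + 1) / (cosh t - a) < sinh (b * t) / (cosh t - a)"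
      using sinh_mult_gt_sinh_div_cosh_plus_one \<open>0 < b\<close> denom_pos by (intro divide_strict_right_mono)
    then show "2 * b * sinh t / ((cosh t + 1) * (cosh t - a)) < sinh (b * t) / (cosh t - a)"
      by simp
  qed
  with G(3) show "integral {0..} (\<lambda>t. sinh (b * t) / (cosh t - a)) > C1_bound a b"
    by simp
qed

end
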